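(* Let $c_1,c_3,c_5\in\mathbb{R}$ and consider the initial value problem $$\ddot u=-(c_1u+c_3u^3+c_5u^5),\qquad u(0)=1,\quad \dot u(0)=0,$$ whose solution satisfies, for $|u|\le 1$, the time-integral relation $$t=\sqrt{\tfrac32}\int_{u^2}^{1}\frac{ds}{\sqrt{s(1-s)\,h_2(s)}},\qquad h_2(s)=(6c_1+3c_3+2c_5)+(3c_3+2c_5)s+2c_5s^2 .$$ Assume $c_5>0$ and $\Delta:=3c_3^2-4c_5(4c_1+c_3+c_5)\le 0$. Set $$\mathcal P=c_1+c_3+c_5,\qquad \mathcal Q=6c_1+3c_3+2c_5,\qquad \mathcal K=4c_1+3c_3+2c_5,$$ $$A=\frac{\sqrt[4]{6}}{2}\,\frac{1}{\sqrt[4]{\mathcal P\,\mathcal Q}},\qquad B=\frac16\,\frac{\mathcal Q}{\mathcal P},\qquad k^2=\frac12-\frac{\sqrt6}{8}\,\frac{\mathcal K}{\sqrt{\mathcal P\,\mathcal Q}}.$$ Then the solution $u$ of the initial value problem satisfies $$u^2(t)=\frac{\sqrt B}{\sqrt B+\cot^2\!\Big(\tfrac12\,\mathrm{am}\big(2\mathbf K(k)-\tfrac{t}{A},\,k\big)\Big)}.$$ This solution is periodic with period $\mathbb T=8A\,\mathbf K(k)$, and $u(t)$ is positive for $0\le t\le \tfrac14\mathbb T$ and for $\tfrac34\mathbb T\le t\le \mathbb T$, while it is negative for $\tfrac14\mathbb T<t<\tfrac34\mathbb T$.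
   Context: $F(\varphi,k)=\int_0^{\sin\varphi}\frac{ds}{\sqrt{(1-s^2)(1-k^2s^2)}}$ is the incomplete elliptic integral of the first kind with modulus $k$; $\mathrm{am}(\cdot,k)$ is the Jacobi amplitude function, i.e. $\varphi=\mathrm{am}(s,k)$ iff $s=F(\varphi,k)$; $\mathbf K(k)=F(\pi/2,k)$ is the complete elliptic integral of the first kind. *)

theory Defs
  imports "HOL-Analysis.Analysis"
begin

text \<open>Incomplete elliptic integral of the first kind with modulus k, in Legendre's
  trigonometric form F(phi,k) = int_0^phi d theta / sqrt(1 - k^2 sin^2 theta), which for
  |phi| <= pi/2 equals int_0^(sin phi) ds / sqrt((1-s^2)(1-k^2 s^2)) (substitution s = sin theta)
  and is its standard extension to all real phi (needed so that am is defined on all of R).\<close>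
definition ellF :: "real \<Rightarrow> real \<Rightarrow> real" where
  "ellF phi k =
     (if 0 \<le> phi then integral {0..phi} (\<lambda>\<theta>. 1 / sqrt (1 - k\<^sup>2 * (sin \<theta>)\<^sup>2))
      else - integral {phi..0} (\<lambda>\<theta>. 1 / sqrt (1 - k\<^sup>2 * (sin \<theta>)\<^sup>2)))"

definition jacobi_am :: "real \<Rightarrow> real \<Rightarrow> real" where
  "jacobi_am s k = (THE phi. ellF phi k = s)"

definition ellK :: "real \<Rightarrow> real" where
  "ellK k = ellF (pi / 2) k"

end

theory Submission
  imports Defs
begin

text \<open>Energy conservation \<open>6 u'\<^sup>2 + 6 c1 u\<^sup>2 + 3 c3 u\<^sup>4 + 2 c5 u\<^sup>6 = Q\<close> turns the equation for \<open>u\<close>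
  into an autonomous second-order equation \<open>w'' = G(w)\<close> for \<open>w = u\<^sup>2\<close>, with \<open>G\<close> a cubic
  polynomial. Write the claimed formula as \<open>b (1 - cos \<phi>) / (b + 1 + (1 - b) cos \<phi>)\<close> with
  \<open>b = \<surd>B\<close> and \<open>\<phi> = am(2K(k) - t/A, k)\<close>; since \<open>\<phi>' = - \<surd>(1 - k\<^sup>2 sin\<^sup>2 \<phi>) / A\<close>, it solves the
  same equation with the same initial data \<open>w(0) = 1\<close>, \<open>w'(0) = 0\<close>, and a Gronwall argument
  identifies the two. As \<open>am(s + 2K(k)) = am(s) + \<pi>\<close>, the angle \<open>\<phi>\<close> starts at \<open>\<pi>\<close> and drops by \<open>\<pi>\<close>
  on every quarter of \<open>T\<close>, so on \<open>[0, T]\<close> the function \<open>u\<close> vanishes exactly at \<open>T/4\<close> and \<open>3T/4\<close>;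
  there energy conservation forces \<open>u' \<noteq> 0\<close>, so \<open>u\<close> changes sign. Finally \<open>u(T) = 1\<close> and, by
  energy conservation, \<open>u'(T) = 0\<close>, so uniqueness for the original equation gives periodicity.\<close>

section \<open>Legendre's integral and the Jacobi amplitude\<close>

definition ellF_integrand :: "real \<Rightarrow> real \<Rightarrow> real" where
  "ellF_integrand k \<theta> = 1 / sqrt (1 - k\<^sup>2 * (sin \<theta>)\<^sup>2)"

lemma ellF_radicand_pos:
  fixes k \<theta> :: real
  assumes "k\<^sup>2 < 1"
  shows "0 < 1 - k\<^sup>2 * (sin \<theta>)\<^sup>2"
proof -
  have "k\<^sup>2 * (sin \<theta>)\<^sup>2 \<le> k\<^sup>2"
    using mult_left_mono[of "(sin \<theta>)\<^sup>2" 1 "k\<^sup>2"] by (simp add: abs_square_le_1)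
  with assms show ?thesis by linarith
qed

lemma ellF_integrand_ge_1:
  assumes "k\<^sup>2 < 1"
  shows "1 \<le> ellF_integrand k \<theta>"
  using ellF_radicand_pos[OF assms, of \<theta>] by (simp add: ellF_integrand_def)

lemma continuous_on_ellF_integrand:
  assumes "k\<^sup>2 < 1"
  shows "continuous_on S (ellF_integrand k)"
proof -
  have "sqrt (1 - k\<^sup>2 * (sin \<theta>)\<^sup>2) \<noteq> 0" for \<theta>
    using ellF_radicand_pos[OF assms, of \<theta>] by simp
  then show ?thesis
    unfolding ellF_integrand_def by (intro continuous_intros) auto
qed

lemma ellF_eq_integral_diff:
  assumes "k\<^sup>2 < 1" and "a \<le> 0" and "a \<le> \<phi>"
  shows "ellF \<phi> k = integral {a..\<phi>} (ellF_integrand k) - integral {a..0} (ellF_integrand k)"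
proof -
  have int: "ellF_integrand k integrable_on {a..max 0 \<phi>}"
    by (intro integrable_continuous_real continuous_on_ellF_integrand assms(1))
  show ?thesis
  proof (cases "0 \<le> \<phi>")
    case True
    with int Henstock_Kurzweil_Integration.integral_combine[of a 0 \<phi> "ellF_integrand k"] assms(2) show ?thesis
      by (simp add: ellF_def ellF_integrand_def[abs_def])
  next
    case False
    with int Henstock_Kurzweil_Integration.integral_combine[of a \<phi> 0 "ellF_integrand k"] assms(3) show ?thesis
      by (simp add: ellF_def ellF_integrand_def[abs_def])
  qed
qed

lemma ellF_has_real_derivative:
  assumes "k\<^sup>2 < 1"
  shows "((\<lambda>\<phi>. ellF \<phi> k) has_real_derivative ellF_integrand k x) (at x)"
proof -
  define a where "a = min 0 x - 1"
  have "((\<lambda>\<phi>. integral {a..\<phi>} (ellF_integrand k)) has_real_derivative ellF_integrand k x)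
      (at x within {a..x + 1})"
    by (rule integral_has_real_derivative) (auto simp: a_def continuous_on_ellF_integrand assms)
  then have "((\<lambda>\<phi>. integral {a..\<phi>} (ellF_integrand k) - integral {a..0} (ellF_integrand k))
      has_real_derivative ellF_integrand k x) (at x)"
    using at_within_interior[of x "{a..x + 1}"] by (auto simp: a_def intro: derivative_eq_intros)
  then show ?thesis
    by (rule has_field_derivative_transform_within_open[where S = "{a<..}"])
       (auto simp: a_def intro!: ellF_eq_integral_diff[OF assms, symmetric])
qed

lemma ellF_0 [simp]: "ellF 0 k = 0"
  by (simp add: ellF_def)

lemma ellF_diff_ge:
  assumes "k\<^sup>2 < 1" and "x \<le> y"
  shows "y - x \<le> ellF y k - ellF x k"
proof -
  have "ellF x k - x \<le> ellF y k - y"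
  proof (rule DERIV_nonneg_imp_nondecreasing[OF assms(2)])
    fix z
    show "\<exists>d. ((\<lambda>\<phi>. ellF \<phi> k - \<phi>) has_real_derivative d) (at z) \<and> 0 \<le> d"
      using DERIV_diff[OF ellF_has_real_derivative[OF assms(1), of z] DERIV_ident]
        ellF_integrand_ge_1[OF assms(1), of z] by (intro exI conjI) auto
  qed
  then show ?thesis by simp
qed

lemma strict_mono_ellF:
  assumes "k\<^sup>2 < 1"
  shows "strict_mono (\<lambda>\<phi>. ellF \<phi> k)"
proof (rule strict_monoI)
  fix x y :: real
  assume "x < y"
  then show "ellF x k < ellF y k" using ellF_diff_ge[OF assms, of x y] by linarith
qed

lemma ellF_surj:
  assumes "k\<^sup>2 < 1"
  shows "\<exists>\<phi>. ellF \<phi> k = s"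
proof -
  have "ellF (- \<bar>s\<bar>) k \<le> s" "s \<le> ellF \<bar>s\<bar> k"
    using ellF_diff_ge[OF assms, of "- \<bar>s\<bar>" 0] ellF_diff_ge[OF assms, of 0 "\<bar>s\<bar>"] by auto
  moreover have "continuous_on {- \<bar>s\<bar>..\<bar>s\<bar>} (\<lambda>\<phi>. ellF \<phi> k)"
    using ellF_has_real_derivative[OF assms]
    by (intro continuous_at_imp_continuous_on ballI DERIV_isCont) blast
  ultimately show ?thesis
    using IVT'[of "\<lambda>\<phi>. ellF \<phi> k" "- \<bar>s\<bar>" s "\<bar>s\<bar>"] by auto
qed

lemma inj_ellF:
  assumes "k\<^sup>2 < 1"
  shows "inj (\<lambda>\<phi>. ellF \<phi> k)"
  using strict_mono_ellF[OF assms] by (rule strict_mono_imp_inj_on)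

lemma ellF_jacobi_am:
  assumes "k\<^sup>2 < 1"
  shows "ellF (jacobi_am s k) k = s"
proof -
  have "\<exists>!\<phi>. ellF \<phi> k = s"
    using ellF_surj[OF assms] injD[OF inj_ellF[OF assms]] by metis
  then show ?thesis
    unfolding jacobi_am_def by (rule theI')
qed

lemma jacobi_am_ellF:
  assumes "k\<^sup>2 < 1"
  shows "jacobi_am (ellF \<phi> k) k = \<phi>"
  using injD[OF inj_ellF[OF assms] ellF_jacobi_am[OF assms, of "ellF \<phi> k"]] .

lemma strict_mono_jacobi_am:
  assumes "k\<^sup>2 < 1"
  shows "strict_mono (\<lambda>s. jacobi_am s k)"
proof (rule strict_monoI)
  fix s t :: real
  assume "s < t"
  then show "jacobi_am s k < jacobi_am t k"
    using strict_mono_less[OF strict_mono_ellF[OF assms], of "jacobi_am s k" "jacobi_am t k"]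
    by (simp add: ellF_jacobi_am[OF assms])
qed

lemma jacobi_am_0 [simp]:
  assumes "k\<^sup>2 < 1"
  shows "jacobi_am 0 k = 0"
  using jacobi_am_ellF[OF assms, of 0] by simp

lemma ellF_pi:
  assumes "k\<^sup>2 < 1"
  shows "ellF pi k = 2 * ellK k"
proof -
  have "((\<lambda>\<phi>. ellF \<phi> k + ellF (pi - \<phi>) k) has_real_derivative 0) (at x)" for x
  proof -
    have "((\<lambda>\<phi>. ellF (pi - \<phi>) k) has_real_derivative ellF_integrand k (pi - x) * (0 - 1)) (at x)"
      by (rule DERIV_chain2[OF ellF_has_real_derivative[OF assms] DERIV_diff[OF DERIV_const DERIV_ident]])
    from DERIV_add[OF ellF_has_real_derivative[OF assms, of x] this] show ?thesis
      by (simp add: ellF_integrand_def)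
  qed
  from DERIV_isconst_all[OF allI[OF this], of 0 "pi / 2"] show ?thesis
    by (simp add: ellK_def)
qed

lemma ellF_add_pi:
  assumes "k\<^sup>2 < 1"
  shows "ellF (\<phi> + pi) k = ellF \<phi> k + 2 * ellK k"
proof -
  have "((\<lambda>\<phi>. ellF (\<phi> + pi) k - ellF \<phi> k) has_real_derivative 0) (at x)" for x
  proof -
    have "((\<lambda>\<phi>. ellF (\<phi> + pi) k) has_real_derivative ellF_integrand k (x + pi) * (1 + 0)) (at x)"
      by (rule DERIV_chain2[OF ellF_has_real_derivative[OF assms] DERIV_add[OF DERIV_ident DERIV_const]])
    from DERIV_diff[OF this ellF_has_real_derivative[OF assms, of x]] show ?thesis
      by (simp add: ellF_integrand_def)
  qed
  from DERIV_isconst_all[OF allI[OF this], of \<phi> 0] show ?thesis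
    by (simp add: ellF_pi[OF assms])
qed

lemma jacobi_am_add_2ellK:
  assumes "k\<^sup>2 < 1"
  shows "jacobi_am (s + 2 * ellK k) k = jacobi_am s k + pi"
  using jacobi_am_ellF[OF assms, of "jacobi_am s k + pi"] ellF_add_pi[OF assms, of "jacobi_am s k"]
  by (simp add: ellF_jacobi_am[OF assms])

lemma ellK_pos:
  assumes "k\<^sup>2 < 1"
  shows "0 < ellK k"
proof -
  have "pi / 2 \<le> ellK k"
    using ellF_diff_ge[OF assms, of 0 "pi / 2"] by (simp add: ellK_def)
  with pi_gt_zero show ?thesis by linarith
qed

lemma jacobi_am_has_real_derivative:
  assumes "k\<^sup>2 < 1"
  shows "((\<lambda>s. jacobi_am s k) has_real_derivative sqrt (1 - k\<^sup>2 * (sin (jacobi_am s k))\<^sup>2)) (at s)"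
proof -
  have "isCont (\<lambda>s. jacobi_am s k) (ellF (jacobi_am s k) k)"
    by (rule isCont_inverse_function[where d = 1])
       (auto simp: jacobi_am_ellF[OF assms] intro: DERIV_isCont[OF ellF_has_real_derivative[OF assms]])
  then have "((\<lambda>s. jacobi_am s k) has_real_derivative inverse (ellF_integrand k (jacobi_am s k))) (at s)"
    using ellF_has_real_derivative[OF assms] ellF_integrand_ge_1[OF assms, of "jacobi_am s k"]
    by (intro DERIV_inverse_function[where a = "s - 1" and b = "s + 1"])
       (auto simp: ellF_jacobi_am[OF assms])
  then show ?thesis
    by (simp add: ellF_integrand_def)
qed

section \<open>Uniqueness for autonomous second-order equations\<close>

lemma lipschitz_on_Icc_if_continuous_deriv:
  fixes F F' :: "real \<Rightarrow> real"
  assumes "\<And>x. (F has_real_derivative F' x) (at x)" and "continuous_on UNIV F'"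
  shows "\<exists>L. L-lipschitz_on {a..b} F"
proof -
  have "bounded (F' ` {a..b})"
    by (intro compact_imp_bounded compact_continuous_image continuous_on_subset[OF assms(2)]) auto
  then obtain L where "L > 0" and L: "\<And>x. x \<in> {a..b} \<Longrightarrow> \<bar>F' x\<bar> \<le> L"
    by (auto simp: bounded_pos)
  have "L-lipschitz_on {a..b} F"
  proof (rule lipschitz_onI)
    fix x y assume "x \<in> {a..b}" "y \<in> {a..b}"
    then show "dist (F x) (F y) \<le> L * dist x y"
      using field_differentiable_bound[of "{a..b}" F F' L x y] assms(1) L
      by (auto simp: dist_real_def intro: has_field_derivative_at_within)
  qed (use \<open>L > 0\<close> in simp)
  then show ?thesis ..
qed

lemma nonpos_if_deriv_le_mult_self:
  fixes E E' :: "real \<Rightarrow> real"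
  assumes deriv: "\<And>s. (E has_real_derivative E' s) (at s)"
    and bound: "\<And>s. t0 \<le> s \<Longrightarrow> s \<le> t \<Longrightarrow> E' s \<le> C * E s"
    and "E t0 = 0" and "t0 \<le> t"
  shows "E t \<le> 0"
proof -
  have "E t * exp (- C * (t - t0)) \<le> E t0 * exp (- C * (t0 - t0))"
  proof (rule DERIV_nonpos_imp_nonincreasing[OF \<open>t0 \<le> t\<close>])
    fix s assume "t0 \<le> s" "s \<le> t"
    have "((\<lambda>s. E s * exp (- C * (s - t0))) has_real_derivative
        (E' s - C * E s) * exp (- C * (s - t0))) (at s)"
      by (rule derivative_eq_intros deriv refl | simp)+ (simp add: algebra_simps)
    moreover have "(E' s - C * E s) * exp (- C * (s - t0)) \<le> 0"
      using bound[OF \<open>t0 \<le> s\<close> \<open>s \<le> t\<close>] by (simp add: mult_nonpos_nonneg)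
    ultimately show "\<exists>y. ((\<lambda>s. E s * exp (- C * (s - t0))) has_real_derivative y) (at s) \<and> y \<le> 0"
      by blast
  qed
  with \<open>E t0 = 0\<close> show ?thesis
    by (simp add: mult_le_0_iff)
qed

lemma zero_if_abs_deriv_le_mult_self:
  fixes E E' :: "real \<Rightarrow> real"
  assumes deriv: "\<And>s. (E has_real_derivative E' s) (at s)"
    and bound: "\<And>s. min t0 t \<le> s \<Longrightarrow> s \<le> max t0 t \<Longrightarrow> \<bar>E' s\<bar> \<le> C * E s"
    and "E t0 = 0" and "0 \<le> E t"
  shows "E t = 0"
proof (cases "t0 \<le> t")
  case True
  have "E t \<le> 0"
  proof (rule nonpos_if_deriv_le_mult_self[OF deriv _ \<open>E t0 = 0\<close> True])
    fix s assume "t0 \<le> s" "s \<le> t"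
    then show "E' s \<le> C * E s" using bound[of s] True by (simp add: abs_le_iff)
  qed
  with \<open>0 \<le> E t\<close> show ?thesis by simp
next
  case False
  have "E (- (- t)) \<le> 0"
  proof (rule nonpos_if_deriv_le_mult_self[of "\<lambda>s. E (- s)" "\<lambda>s. - E' (- s)" "- t0" "- t" C])
    show "((\<lambda>s. E (- s)) has_real_derivative - E' (- s)) (at s)" for s
      using DERIV_chain2[OF deriv DERIV_minus[OF DERIV_ident]] by simp
  next
    fix s assume "- t0 \<le> s" "s \<le> - t"
    then show "- E' (- s) \<le> C * E (- s)" using bound[of "- s"] False by (simp add: abs_le_iff)
  qed (use False \<open>E t0 = 0\<close> in auto)
  with \<open>0 \<le> E t\<close> show ?thesis by simp
qed

lemma second_order_autonomous_ode_unique: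
  fixes F y1 y1' y2 y2' :: "real \<Rightarrow> real"
  assumes lipschitz: "\<And>a b. \<exists>L. L-lipschitz_on {a..b} F"
    and y1: "\<And>t. (y1 has_real_derivative y1' t) (at t)" "\<And>t. (y1' has_real_derivative F (y1 t)) (at t)"
    and y2: "\<And>t. (y2 has_real_derivative y2' t) (at t)" "\<And>t. (y2' has_real_derivative F (y2 t)) (at t)"
    and init: "y1 t0 = y2 t0" "y1' t0 = y2' t0"
  shows "y1 t = y2 t"
proof -
  define I where "I = {min t0 t..max t0 t}"
  have "continuous_on I y1" "continuous_on I y2"
    using y1(1) y2(1) by (meson DERIV_isCont continuous_at_imp_continuous_on)+
  then have "bounded (y1 ` I \<union> y2 ` I)"
    unfolding I_def by (intro compact_imp_bounded compact_Un compact_continuous_image compact_Icc)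
  then obtain M where "\<forall>x \<in> y1 ` I \<union> y2 ` I. \<bar>x\<bar> \<le> M"
    by (auto simp: bounded_iff)
  then have M: "\<And>s. s \<in> I \<Longrightarrow> \<bar>y1 s\<bar> \<le> M \<and> \<bar>y2 s\<bar> \<le> M"
    by simp
  obtain L where L: "L-lipschitz_on {-M..M} F"
    using lipschitz by blast
  define E where "E s = (y1 s - y2 s)\<^sup>2 + (y1' s - y2' s)\<^sup>2" for s
  define E' where "E' s = 2 * (y1 s - y2 s) * (y1' s - y2' s)
      + 2 * (y1' s - y2' s) * (F (y1 s) - F (y2 s))" for s
  have "E t = 0"
  proof (rule zero_if_abs_deriv_le_mult_self[of E E' t0 t "1 + L"])
    show "(E has_real_derivative E' s) (at s)" for s
      unfolding E_def[abs_def] E'_def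
      by (rule derivative_eq_intros y1 y2 refl | simp)+ (simp add: algebra_simps)
  next
    fix s assume "min t0 t \<le> s" "s \<le> max t0 t"
    define e where "e = y1 s - y2 s"
    define f where "f = y1' s - y2' s"
    have Fe: "\<bar>F (y1 s) - F (y2 s)\<bar> \<le> L * \<bar>e\<bar>"
      using M[of s] lipschitz_onD[OF L, of "y1 s" "y2 s"] \<open>min t0 t \<le> s\<close> \<open>s \<le> max t0 t\<close>
      by (simp add: I_def dist_real_def abs_le_iff e_def)
    have ef: "2 * \<bar>e\<bar> * \<bar>f\<bar> \<le> e\<^sup>2 + f\<^sup>2"
      using sum_squares_bound[of "\<bar>e\<bar>" "\<bar>f\<bar>"] by simp
    have "\<bar>E' s\<bar> \<le> 2 * \<bar>e\<bar> * \<bar>f\<bar> + 2 * \<bar>f\<bar> * \<bar>F (y1 s) - F (y2 s)\<bar>"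
      using abs_triangle_ineq[of "2 * e * f" "2 * f * (F (y1 s) - F (y2 s))"]
      unfolding E'_def e_def[symmetric] f_def[symmetric] by (simp add: abs_mult)
    also have "\<dots> \<le> 2 * \<bar>e\<bar> * \<bar>f\<bar> + L * (2 * \<bar>e\<bar> * \<bar>f\<bar>)"
      using mult_left_mono[OF Fe, of "2 * \<bar>f\<bar>"] by (simp add: algebra_simps)
    also have "\<dots> \<le> (1 + L) * E s"
      using ef mult_left_mono[OF ef lipschitz_on_nonneg[OF L]]
      by (simp add: E_def e_def[symmetric] f_def[symmetric] algebra_simps)
    finally show "\<bar>E' s\<bar> \<le> (1 + L) * E s" .
  qed (use init in \<open>simp_all add: E_def\<close>)
  then show ?thesis
    by (simp add: E_def add_nonneg_eq_0_iff)
qed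

section \<open>Sign changes at simple zeros\<close>

lemma same_sign_if_no_zero:
  fixes f :: "real \<Rightarrow> real"
  assumes "continuous_on {a..b} f" and "a \<le> b" and "\<And>x. x \<in> {a..b} \<Longrightarrow> f x \<noteq> 0"
  shows "0 < f a * f b"
proof (rule ccontr)
  assume "\<not> 0 < f a * f b"
  then have "f a \<le> 0 \<and> 0 \<le> f b \<or> f b \<le> 0 \<and> 0 \<le> f a"
    by (auto simp: zero_less_mult_iff not_less)
  then obtain x where "x \<in> {a..b}" "f x = 0"
    using IVT'[of f a 0 b] IVT2'[of f b 0 a] assms(1,2) by auto
  with assms(3) show False by blast
qed

lemma simple_zero_sign_change:
  fixes f f' :: "real \<Rightarrow> real"
  assumes deriv: "\<And>x. (f has_real_derivative f' x) (at x)"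
    and "f a = 0" "f' a \<noteq> 0" "s < a" "a < t"
    and no_zero: "\<And>x. x \<in> {s..t} \<Longrightarrow> x \<noteq> a \<Longrightarrow> f x \<noteq> 0"
  shows "f s * f t < 0"
proof -
  have *: "g s * g t < 0"
    if deriv: "\<And>x. (g has_real_derivative g' x) (at x)" and "g a = 0" "g' a > 0"
      and no_zero: "\<And>x. x \<in> {s..t} \<Longrightarrow> x \<noteq> a \<Longrightarrow> g x \<noteq> 0" for g g'
  proof -
    obtain d1 where "d1 > 0" and left: "\<And>h. 0 < h \<Longrightarrow> h < d1 \<Longrightarrow> g (a - h) < g a"
      using DERIV_pos_inc_left[OF deriv \<open>g' a > 0\<close>] by blast
    obtain d2 where "d2 > 0" and right: "\<And>h. 0 < h \<Longrightarrow> h < d2 \<Longrightarrow> g a < g (a + h)"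
      using DERIV_pos_inc_right[OF deriv \<open>g' a > 0\<close>] by blast
    define h where "h = min (min d1 d2) (min (a - s) (t - a)) / 2"
    have h: "0 < h" "h < d1" "h < d2" "h < a - s" "h < t - a"
      using \<open>d1 > 0\<close> \<open>d2 > 0\<close> \<open>s < a\<close> \<open>a < t\<close> by (auto simp: h_def)
    have cont: "continuous_on S g" for S
      using deriv by (meson DERIV_isCont continuous_at_imp_continuous_on)
    have "0 < g s * g (a - h)"
      using h no_zero by (intro same_sign_if_no_zero[OF cont]) auto
    moreover have "0 < g (a + h) * g t"
      using h no_zero by (intro same_sign_if_no_zero[OF cont]) auto
    moreover have "g (a - h) < 0" "0 < g (a + h)"
      using left[OF h(1,2)] right[OF h(1,3)] \<open>g a = 0\<close> by auto
    ultimately show ?thesis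
      by (smt (verit) mult_neg_pos zero_less_mult_iff)
  qed
  show ?thesis
  proof (cases "f' a > 0")
    case True
    then show ?thesis using * deriv assms(2) no_zero by blast
  next
    case False
    then have "(- f s) * (- f t) < 0"
      using assms(2,3) no_zero by (intro *[of "\<lambda>x. - f x" "\<lambda>x. - f' x"] DERIV_minus deriv) auto
    then show ?thesis by simp
  qed
qed

section \<open>The quintic oscillator and the equation for \<open>u\<^sup>2\<close>\<close>

text \<open>On the energy level of \<open>u(0) = 1\<close>, \<open>u'(0) = 0\<close>, a solution of
  \<open>u'' = -(c1 u + c3 u\<^sup>3 + c5 u\<^sup>5)\<close> satisfies \<open>(u\<^sup>2)'' = square_ode_rhs c1 c3 c5 (u\<^sup>2)\<close>.\<close>

definition square_ode_rhs :: "real \<Rightarrow> real \<Rightarrow> real \<Rightarrow> real \<Rightarrow> real" where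
  "square_ode_rhs c1 c3 c5 w = (6 * c1 + 3 * c3 + 2 * c5) / 3 - 4 * c1 * w - 3 * c3 * w\<^sup>2 - 8 / 3 * c5 * w ^ 3"

lemma square_ode_rhs_on_energy_level:
  fixes c1 c3 c5 v d :: real
  assumes "6 * d\<^sup>2 + 6 * c1 * v\<^sup>2 + 3 * c3 * v ^ 4 + 2 * c5 * v ^ 6 = 6 * c1 + 3 * c3 + 2 * c5"
  shows "square_ode_rhs c1 c3 c5 (v\<^sup>2) = 2 * d\<^sup>2 - 2 * v * (c1 * v + c3 * v ^ 3 + c5 * v ^ 5)"
  using assms unfolding square_ode_rhs_def
  by (simp add: field_simps power2_eq_square power3_eq_cube eval_nat_numeral)

lemma lipschitz_on_square_ode_rhs: "\<exists>L. L-lipschitz_on {a..b} (square_ode_rhs c1 c3 c5)"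
  by (rule lipschitz_on_Icc_if_continuous_deriv[where F' = "\<lambda>w. - 4 * c1 - 6 * c3 * w - 8 * c5 * w\<^sup>2"])
     (auto simp: square_ode_rhs_def[abs_def] power2_eq_square intro!: derivative_eq_intros continuous_intros)

locale quintic_oscillator =
  fixes c1 c3 c5 :: real and u u' :: "real \<Rightarrow> real"
  assumes deriv_u: "\<And>t. (u has_real_derivative u' t) (at t)"
    and deriv_u': "\<And>t. (u' has_real_derivative - (c1 * u t + c3 * (u t)^3 + c5 * (u t)^5)) (at t)"
    and u_0: "u 0 = 1"
    and u'_0: "u' 0 = 0"
begin

lemma energy_conservation:
  "6 * (u' t)\<^sup>2 + 6 * c1 * (u t)\<^sup>2 + 3 * c3 * (u t) ^ 4 + 2 * c5 * (u t) ^ 6 = 6 * c1 + 3 * c3 + 2 * c5"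
proof -
  define E where "E t = 6 * (u' t)\<^sup>2 + 6 * c1 * (u t)\<^sup>2 + 3 * c3 * (u t) ^ 4 + 2 * c5 * (u t) ^ 6" for t
  have "(E has_real_derivative 0) (at t)" for t
    unfolding E_def[abs_def]
    by (rule derivative_eq_intros deriv_u deriv_u' refl)+ (simp add: algebra_simps power2_eq_square power3_eq_cube)
  then have "E t = E 0"
    using DERIV_isconst_all by blast
  then show ?thesis
    by (simp add: E_def u_0 u'_0)
qed

lemma continuous_on_u: "continuous_on S u"
  using deriv_u by (meson DERIV_isCont continuous_at_imp_continuous_on)

lemma square_has_derivative: "((\<lambda>t. (u t)\<^sup>2) has_real_derivative 2 * u t * u' t) (at t)"
  by (rule derivative_eq_intros deriv_u refl)+ simp

lemma square_has_second_derivative: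
  "((\<lambda>t. 2 * u t * u' t) has_real_derivative square_ode_rhs c1 c3 c5 ((u t)\<^sup>2)) (at t)"
  using DERIV_mult[OF DERIV_cmult[OF deriv_u, of 2] deriv_u', of t]
  unfolding square_ode_rhs_on_energy_level[OF energy_conservation]
  by (simp add: power2_eq_square algebra_simps)

lemma periodic_if_returns:
  assumes "u T = 1"
  shows "u (t + T) = u t"
proof -
  have "(u' T)\<^sup>2 = 0"
    using energy_conservation[of T] assms by simp
  then have "u' T = 0"
    by simp
  have lipschitz: "\<exists>L. L-lipschitz_on {a..b} (\<lambda>x. - (c1 * x + c3 * x ^ 3 + c5 * x ^ 5))" for a b
  proof (rule lipschitz_on_Icc_if_continuous_deriv)
    show "((\<lambda>x. - (c1 * x + c3 * x ^ 3 + c5 * x ^ 5)) has_real_derivative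
        - (c1 + 3 * c3 * x\<^sup>2 + 5 * c5 * x ^ 4)) (at x)" for x
      by (rule derivative_eq_intros refl)+ simp
    show "continuous_on UNIV (\<lambda>x. - (c1 + 3 * c3 * x\<^sup>2 + 5 * c5 * x ^ 4))"
      by (intro continuous_intros)
  qed
  have shift: "((\<lambda>t. u (t + T)) has_real_derivative u' (t + T)) (at t)" for t
    using deriv_u[of "t + T"] by (simp add: DERIV_shift)
  have shift': "((\<lambda>t. u' (t + T)) has_real_derivative
      - (c1 * u (t + T) + c3 * (u (t + T)) ^ 3 + c5 * (u (t + T)) ^ 5)) (at t)" for t
    using deriv_u'[of "t + T"] by (simp add: DERIV_shift)
  have "u (0 + T) = u 0" "u' (0 + T) = u' 0"
    using assms \<open>u' T = 0\<close> by (simp_all add: u_0 u'_0)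
  then show ?thesis
    by (rule second_order_autonomous_ode_unique[OF lipschitz shift shift' deriv_u deriv_u'])
qed

end

section \<open>The cnoidal solution\<close>

lemma double_angle_ratio_eq_cot:
  fixes b x :: real
  assumes "b > 0" and "sin x \<noteq> 0"
  shows "b * (1 - cos (2 * x)) / (b + 1 + (1 - b) * cos (2 * x)) = b / (b + (cot x)\<^sup>2)"
proof -
  have num: "1 - cos (2 * x) = 2 * (sin x)\<^sup>2"
    by (simp add: cos_double_sin)
  have den: "b + 1 + (1 - b) * cos (2 * x) = 2 * (b * (sin x)\<^sup>2 + (cos x)\<^sup>2)"
    unfolding cos_double_sin[of x] cos_squared_eq by (simp add: algebra_simps)
  have "0 < (sin x)\<^sup>2"
    using assms(2) by simp
  with assms(1) have "0 < b * (sin x)\<^sup>2 + (cos x)\<^sup>2"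
    by (simp add: add_pos_nonneg)
  with assms show ?thesis
    unfolding num den cot_def by (simp add: field_simps power2_eq_square)
qed

locale cnoidal_parameters =
  fixes c1 c3 c5 :: real
  assumes discriminant_nonpos: "3 * c3\<^sup>2 - 4 * c5 * (4 * c1 + c3 + c5) \<le> 0"
    and P_pos: "c1 + c3 + c5 > 0"
    and Q_pos: "6 * c1 + 3 * c3 + 2 * c5 > 0"
    and k_radicand_less_1: "1/2 - sqrt 6 / 8 * (4 * c1 + 3 * c3 + 2 * c5)
                   / sqrt ((c1 + c3 + c5) * (6 * c1 + 3 * c3 + 2 * c5)) < 1"
begin

definition P :: real where "P = c1 + c3 + c5"
definition Q :: real where "Q = 6 * c1 + 3 * c3 + 2 * c5"
definition K :: real where "K = 4 * c1 + 3 * c3 + 2 * c5"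
definition A :: real where "A = root 4 6 / 2 * (1 / root 4 (P * Q))"
definition B :: real where "B = Q / (6 * P)"
definition k :: real where "k = sqrt (1/2 - sqrt 6 / 8 * K / sqrt (P * Q))"
definition T :: real where "T = 8 * A * ellK k"
definition b :: real where "b = sqrt B"

text \<open>In the notation of the statement, \<open>b = \<surd>B\<close>, \<open>phi t = am(2K(k) - t/A, k)\<close> and \<open>delta\<close> is
  Legendre's \<open>\<Delta>(\<theta>) = \<surd>(1 - k\<^sup>2 sin\<^sup>2 \<theta>)\<close>, so that \<open>phi' = - delta \<circ> phi / A\<close>. The claimed
  value of \<open>u\<^sup>2\<close> is \<open>profile (phi t)\<close>, the cotangent formula rewritten as a rational function of
  \<open>cos (phi t)\<close>.\<close>

definition phi :: "real \<Rightarrow> real" where "phi t = jacobi_am (2 * ellK k - t / A) k"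
definition delta :: "real \<Rightarrow> real" where "delta \<theta> = sqrt (1 - k\<^sup>2 * (sin \<theta>)\<^sup>2)"
definition denom :: "real \<Rightarrow> real" where "denom \<theta> = b + 1 + (1 - b) * cos \<theta>"
definition profile :: "real \<Rightarrow> real" where "profile \<theta> = b * (1 - cos \<theta>) / denom \<theta>"
definition profile' :: "real \<Rightarrow> real" where "profile' \<theta> = 2 * b * sin \<theta> / (denom \<theta>)\<^sup>2"
definition profile'' :: "real \<Rightarrow> real"
  where "profile'' \<theta> = 2 * b * (cos \<theta> * denom \<theta> + 2 * (1 - b) * (sin \<theta>)\<^sup>2) / denom \<theta> ^ 3"

lemma P_gt_0: "0 < P"
  using P_pos unfolding P_def .

lemma Q_gt_0: "0 < Q"
  using Q_pos unfolding Q_def .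

lemma b_pos: "0 < b"
  using P_gt_0 Q_gt_0 by (simp add: b_def B_def)

lemma Q_eq: "Q = 6 * P * b\<^sup>2"
  using P_gt_0 Q_gt_0 by (simp add: b_def B_def)

lemma sqrt_PQ: "sqrt (P * Q) = sqrt 6 * P * b"
proof -
  have "P * Q = (sqrt 6 * P * b)\<^sup>2"
    by (simp add: Q_eq power_mult_distrib power2_eq_square)
  then show ?thesis
    using P_gt_0 b_pos by simp
qed

lemma A_pos: "0 < A"
  using P_gt_0 Q_gt_0 by (simp add: A_def)

lemma A_sq: "A\<^sup>2 = 1 / (4 * P * b)"
proof -
  have root4_sq: "(root 4 x)\<^sup>2 = sqrt x" if "0 \<le> x" for x :: real
    using real_root_mult_exp[of 2 2 x] real_root_pow_pos2[of 2 "root 2 x"] that by (simp add: sqrt_def)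
  have "A\<^sup>2 = sqrt 6 / 4 / sqrt (P * Q)"
    using P_gt_0 Q_gt_0 by (simp add: A_def power_mult_distrib power_divide root4_sq)
  also have "\<dots> = 1 / (4 * P * b)"
    using P_gt_0 b_pos by (simp add: sqrt_PQ field_simps)
  finally show ?thesis .
qed

lemma k_radicand: "1/2 - sqrt 6 / 8 * K / sqrt (P * Q) = 1/2 - K / (8 * P * b)"
  using P_gt_0 b_pos by (simp add: sqrt_PQ field_simps)

lemma k_sq: "k\<^sup>2 = 1/2 - K / (8 * P * b)"
proof -
  have "(4 * P * b)\<^sup>2 = 8 / 3 * (P * Q)"
    by (simp add: Q_eq power2_eq_square)
  moreover have "8 * (P * Q) - 3 * K\<^sup>2 = - (3 * c3\<^sup>2 - 4 * c5 * (4 * c1 + c3 + c5))"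
    by (simp add: P_def Q_def K_def power2_eq_square algebra_simps)
  ultimately have "\<bar>K\<bar> \<le> \<bar>4 * P * b\<bar>"
    using discriminant_nonpos by (simp add: abs_le_square_iff)
  then have "K \<le> 4 * P * b"
    using P_gt_0 b_pos by simp
  then have "0 \<le> 1/2 - K / (8 * P * b)"
    using P_gt_0 b_pos by (simp add: field_simps)
  then show ?thesis
    unfolding k_def k_radicand by simp
qed

lemma k_sq_less_1: "k\<^sup>2 < 1"
proof -
  have "1/2 - sqrt 6 / 8 * K / sqrt (P * Q) < 1"
    unfolding P_def Q_def K_def by (rule k_radicand_less_1)
  then show ?thesis
    unfolding k_sq k_radicand .
qed

lemma T_pos: "0 < T"
  using A_pos ellK_pos[OF k_sq_less_1] by (simp add: T_def)

lemma delta_pos: "0 < delta \<theta>"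
  using ellF_radicand_pos[OF k_sq_less_1] by (simp add: delta_def)

lemma delta_sq: "(delta \<theta>)\<^sup>2 = 1 - k\<^sup>2 * (sin \<theta>)\<^sup>2"
  using ellF_radicand_pos[OF k_sq_less_1, of \<theta>] by (simp add: delta_def)

lemma delta_has_derivative: "(delta has_real_derivative - k\<^sup>2 * sin \<theta> * cos \<theta> / delta \<theta>) (at \<theta>)"
proof -
  have "((\<lambda>\<theta>. 1 - k\<^sup>2 * (sin \<theta>)\<^sup>2) has_real_derivative - (k\<^sup>2 * (2 * sin \<theta> * cos \<theta>))) (at \<theta>)"
    by (rule derivative_eq_intros refl)+ simp
  from DERIV_chain2[OF DERIV_real_sqrt[OF ellF_radicand_pos[OF k_sq_less_1]] this]
  show ?thesis
    using delta_pos[of \<theta>] by (simp add: delta_def[abs_def] field_simps)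
qed

lemma phi_has_derivative: "(phi has_real_derivative - delta (phi t) / A) (at t)"
proof -
  have "((\<lambda>t. 2 * ellK k - t / A) has_real_derivative 0 - 1 / A) (at t)"
    by (intro DERIV_diff DERIV_const DERIV_cdivide DERIV_ident)
  from DERIV_chain2[OF jacobi_am_has_real_derivative[OF k_sq_less_1] this] show ?thesis
    by (simp add: phi_def[abs_def] delta_def)
qed

lemma phi_less_iff: "phi s < phi t \<longleftrightarrow> t < s"
  using A_pos by (simp add: phi_def strict_mono_less[OF strict_mono_jacobi_am[OF k_sq_less_1]]
      divide_less_cancel)

lemma phi_le_iff: "phi s \<le> phi t \<longleftrightarrow> t \<le> s"
  by (meson not_less phi_less_iff)

lemma phi_eq_iff: "phi s = phi t \<longleftrightarrow> s = t"
  by (metis order.eq_iff phi_le_iff)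

lemma phi_add_quarter_period: "phi (t + T / 4) = phi t - pi"
proof -
  have "2 * ellK k - (t + T / 4) / A + 2 * ellK k = 2 * ellK k - t / A"
    using A_pos by (simp add: T_def field_simps)
  then show ?thesis
    using jacobi_am_add_2ellK[OF k_sq_less_1, of "2 * ellK k - (t + T / 4) / A"] by (simp add: phi_def)
qed

lemma phi_0: "phi 0 = pi"
  using jacobi_am_add_2ellK[OF k_sq_less_1, of 0] k_sq_less_1 by (simp add: phi_def)

lemma phi_quarter_multiples: "phi (real n * (T / 4)) = pi - real n * pi"
proof (induction n)
  case 0
  then show ?case by (simp add: phi_0)
next
  case (Suc n)
  have "real (Suc n) * (T / 4) = real n * (T / 4) + T / 4"
    by (simp add: algebra_simps)
  then show ?case
    by (simp only: phi_add_quarter_period Suc.IH) (simp add: algebra_simps)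
qed

lemma denom_pos: "0 < denom \<theta>"
proof (cases "cos \<theta> = -1")
  case True
  then show ?thesis using b_pos by (simp add: denom_def)
next
  case False
  then have "0 < 1 + cos \<theta>"
    using cos_ge_minus_one[of \<theta>] by linarith
  moreover have "0 \<le> b * (1 - cos \<theta>)"
    using b_pos by simp
  ultimately show ?thesis
    by (simp add: denom_def algebra_simps)
qed

lemma denom_has_derivative: "(denom has_real_derivative - (1 - b) * sin \<theta>) (at \<theta>)"
  unfolding denom_def[abs_def] by (auto intro!: derivative_eq_intros simp: algebra_simps)

lemma profile_has_derivative: "(profile has_real_derivative profile' \<theta>) (at \<theta>)"
proof -
  have "denom \<theta> \<noteq> 0"
    using denom_pos[of \<theta>] by simp
  then have "(profile has_real_derivative
      (b * sin \<theta> * denom \<theta> - b * (1 - cos \<theta>) * (- (1 - b) * sin \<theta>)) / (denom \<theta>)\<^sup>2) (at \<theta>)"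
    unfolding profile_def[abs_def]
    by (auto intro!: derivative_eq_intros denom_has_derivative simp: power2_eq_square algebra_simps)
  moreover have "(b * sin \<theta> * denom \<theta> - b * (1 - cos \<theta>) * (- (1 - b) * sin \<theta>)) / (denom \<theta>)\<^sup>2
      = profile' \<theta>"
    by (simp add: profile'_def denom_def algebra_simps)
  ultimately show ?thesis
    by simp
qed

lemma profile'_has_derivative: "(profile' has_real_derivative profile'' \<theta>) (at \<theta>)"
proof -
  have "denom \<theta> \<noteq> 0"
    using denom_pos[of \<theta>] by simp
  then have "(profile' has_real_derivative
      (2 * b * cos \<theta> * (denom \<theta>)\<^sup>2 - 2 * b * sin \<theta> * (2 * denom \<theta> * (- (1 - b) * sin \<theta>)))
        / ((denom \<theta>)\<^sup>2)\<^sup>2) (at \<theta>)"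
    unfolding profile'_def[abs_def]
    by (auto intro!: derivative_eq_intros denom_has_derivative simp: power2_eq_square algebra_simps)
  moreover have "(2 * b * cos \<theta> * (denom \<theta>)\<^sup>2 - 2 * b * sin \<theta> * (2 * denom \<theta> * (- (1 - b) * sin \<theta>)))
        / ((denom \<theta>)\<^sup>2)\<^sup>2 = profile'' \<theta>"
    using \<open>denom \<theta> \<noteq> 0\<close> by (simp add: profile''_def field_simps power2_eq_square power3_eq_cube)
  ultimately show ?thesis
    by simp
qed

text \<open>The right-hand side is \<open>(profile \<circ> phi)''\<close> expressed at \<open>phi t = \<theta>\<close>.\<close>

lemma square_ode_rhs_profile:
  "square_ode_rhs c1 c3 c5 (profile \<theta>)
   = (profile'' \<theta> * (delta \<theta>)\<^sup>2 - k\<^sup>2 * sin \<theta> * cos \<theta> * profile' \<theta>) / A\<^sup>2"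
proof -
  define c s N where "c = cos \<theta>" and "s = sin \<theta>" and "N = denom \<theta>"
  have N: "N = b + 1 + (1 - b) * c" "N \<noteq> 0"
    using denom_pos[of \<theta>] by (simp_all add: N_def c_def denom_def)
  have sc: "s\<^sup>2 + c\<^sup>2 = 1"
    by (simp add: s_def c_def)
  have kk: "8 * P * b\<^sup>2 * k\<^sup>2 = 4 * P * b\<^sup>2 - K * b"
    unfolding k_sq using P_gt_0 b_pos by (simp add: field_simps power2_eq_square)
  have "N ^ 3 * square_ode_rhs c1 c3 c5 (profile \<theta>)
      = Q / 3 * N ^ 3 - 4 * c1 * b * (1 - c) * N\<^sup>2 - 3 * c3 * b\<^sup>2 * (1 - c)\<^sup>2 * N
        - 8 / 3 * c5 * b ^ 3 * (1 - c) ^ 3"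
    using N(2) unfolding square_ode_rhs_def profile_def Q_def c_def[symmetric] N_def[symmetric]
    by (simp add: field_simps power2_eq_square power3_eq_cube)
  also have "\<dots> = 4 * P * b * (2 * b * (c * N + 2 * (1 - b) * s\<^sup>2) * (1 - k\<^sup>2 * s\<^sup>2)
      - 2 * b * k\<^sup>2 * s\<^sup>2 * c * N)"
    using N(1) sc Q_eq kk unfolding P_def Q_def K_def by algebra
  also have "\<dots> = N ^ 3 * ((2 * b * (c * N + 2 * (1 - b) * s\<^sup>2) / N ^ 3 * (1 - k\<^sup>2 * s\<^sup>2)
      - k\<^sup>2 * s * c * (2 * b * s / N\<^sup>2)) / (1 / (4 * P * b)))"
    using N(2) P_gt_0 b_pos by (simp add: field_simps power2_eq_square power3_eq_cube)
  finally show ?thesis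
    using N(2) unfolding A_sq delta_sq profile'_def profile''_def c_def[symmetric] s_def[symmetric]
      N_def[symmetric]
    by simp
qed

lemma profile_phi_has_derivative:
  "((\<lambda>t. profile (phi t)) has_real_derivative - profile' (phi t) * delta (phi t) / A) (at t)"
  using DERIV_chain2[OF profile_has_derivative phi_has_derivative] by simp

lemma profile'_phi_has_derivative:
  "((\<lambda>t. - profile' (phi t) * delta (phi t) / A) has_real_derivative
     square_ode_rhs c1 c3 c5 (profile (phi t))) (at t)"
proof -
  define \<theta> where "\<theta> = phi t"
  have "((\<lambda>t. - profile' (phi t) * delta (phi t) / A) has_real_derivative
      (- profile' \<theta> * (- k\<^sup>2 * sin \<theta> * cos \<theta> / delta \<theta> * (- delta \<theta> / A))
       + - (profile'' \<theta> * (- delta \<theta> / A)) * delta \<theta>) / A) (at t)"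
    unfolding \<theta>_def
    by (intro DERIV_cdivide DERIV_mult' DERIV_minus DERIV_chain2[OF profile'_has_derivative phi_has_derivative]
        DERIV_chain2[OF delta_has_derivative phi_has_derivative])
  moreover have "(- profile' \<theta> * (- k\<^sup>2 * sin \<theta> * cos \<theta> / delta \<theta> * (- delta \<theta> / A))
       + - (profile'' \<theta> * (- delta \<theta> / A)) * delta \<theta>) / A
      = square_ode_rhs c1 c3 c5 (profile \<theta>)"
    unfolding square_ode_rhs_profile
    using delta_pos[of \<theta>] A_pos by (simp add: field_simps power2_eq_square)
  ultimately show ?thesis
    by (simp add: \<theta>_def)
qed

lemma profile_eq_1: "cos \<theta> = -1 \<Longrightarrow> profile \<theta> = 1"
  using b_pos by (simp add: profile_def denom_def)

lemma profile_eq_0_iff: "profile \<theta> = 0 \<longleftrightarrow> cos \<theta> = 1"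
  using b_pos denom_pos[of \<theta>] by (simp add: profile_def)

lemma profile_eq_cot: "sin (\<theta> / 2) \<noteq> 0 \<Longrightarrow> profile \<theta> = sqrt B / (sqrt B + (cot (\<theta> / 2))\<^sup>2)"
  using double_angle_ratio_eq_cot[OF b_pos, of "\<theta> / 2"] by (simp add: profile_def denom_def b_def)

lemma phi_quarters: "phi (T / 4) = 0" "phi (3 * T / 4) = - 2 * pi" "phi T = - 3 * pi"
  using phi_quarter_multiples[of 1] phi_quarter_multiples[of 3] phi_quarter_multiples[of 4] by simp_all

end

locale quintic_cnoidal_solution = quintic_oscillator c1 c3 c5 u u' + cnoidal_parameters c1 c3 c5
  for c1 c3 c5 :: real and u u' :: "real \<Rightarrow> real"
begin

lemma square_eq_profile: "(u t)\<^sup>2 = profile (phi t)"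
proof -
  have "(u 0)\<^sup>2 = profile (phi 0)" "2 * u 0 * u' 0 = - profile' (phi 0) * delta (phi 0) / A"
    by (simp_all add: u_0 u'_0 phi_0 profile_eq_1 profile'_def)
  then show ?thesis
    by (rule second_order_autonomous_ode_unique[OF lipschitz_on_square_ode_rhs square_has_derivative
          square_has_second_derivative profile_phi_has_derivative profile'_phi_has_derivative])
qed

lemma square_eq_cot: "sin (phi t / 2) \<noteq> 0 \<Longrightarrow> (u t)\<^sup>2 = sqrt B / (sqrt B + (cot (phi t / 2))\<^sup>2)"
  by (simp add: square_eq_profile profile_eq_cot)

lemma deriv_nonzero_at_zero: "u t = 0 \<Longrightarrow> u' t \<noteq> 0"
  using energy_conservation[of t] Q_gt_0 by (auto simp: Q_def)

lemma zero_iff: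
  assumes "0 \<le> t" and "t \<le> T"
  shows "u t = 0 \<longleftrightarrow> t = T / 4 \<or> t = 3 * T / 4"
proof -
  have "u t = 0 \<longleftrightarrow> profile (phi t) = 0"
    by (simp flip: square_eq_profile)
  also have "\<dots> \<longleftrightarrow> cos (phi t) = 1"
    by (rule profile_eq_0_iff)
  also have "\<dots> \<longleftrightarrow> phi t = 0 \<or> phi t = - 2 * pi"
  proof
    assume "cos (phi t) = 1"
    then obtain n :: int where n: "phi t = of_int n * 2 * pi"
      by (auto simp: cos_one_2pi_int)
    have "phi T \<le> phi t" "phi t \<le> phi 0"
      using assms by (simp_all add: phi_le_iff)
    then have "real_of_int (- 3) * pi \<le> real_of_int (2 * n) * pi"
      "real_of_int (2 * n) * pi \<le> real_of_int 1 * pi"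
      using n by (simp_all add: phi_quarters phi_0)
    then have "- 3 \<le> 2 * n" "2 * n \<le> 1"
      by (simp_all only: mult_le_cancel_right_pos[OF pi_gt_zero] of_int_le_iff)
    then have "n = 0 \<or> n = - 1"
      by linarith
    with n show "phi t = 0 \<or> phi t = - 2 * pi"
      by auto
  qed auto
  also have "\<dots> \<longleftrightarrow> t = T / 4 \<or> t = 3 * T / 4"
    by (metis phi_eq_iff phi_quarters(1,2))
  finally show ?thesis .
qed

lemma positive_first_quarter:
  assumes "0 \<le> t" and "t < T / 4"
  shows "0 < u t"
proof -
  have "0 < u 0 * u t"
  proof (rule same_sign_if_no_zero[OF continuous_on_u \<open>0 \<le> t\<close>])
    fix x assume "x \<in> {0..t}"
    then show "u x \<noteq> 0"
      using assms T_pos zero_iff[of x] by auto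
  qed
  then show ?thesis
    by (simp add: u_0)
qed

lemma negative_middle_half:
  assumes "T / 4 < t" and "t < 3 * T / 4"
  shows "u t < 0"
proof -
  have "u (T / 4) = 0"
    using T_pos zero_iff[of "T / 4"] by simp
  have "u 0 * u t < 0"
  proof (rule simple_zero_sign_change[OF deriv_u \<open>u (T / 4) = 0\<close>
        deriv_nonzero_at_zero[OF \<open>u (T / 4) = 0\<close>]])
    show "0 < T / 4" "T / 4 < t"
      using T_pos assms by simp_all
    fix x assume "x \<in> {0..t}" "x \<noteq> T / 4"
    then show "u x \<noteq> 0"
      using assms zero_iff[of x] by auto
  qed
  then show ?thesis
    by (simp add: u_0)
qed

lemma positive_last_quarter:
  assumes "3 * T / 4 < t" and "t \<le> T"
  shows "0 < u t"
proof -
  have "u (3 * T / 4) = 0"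
    using T_pos zero_iff[of "3 * T / 4"] by simp
  have "u (T / 2) * u t < 0"
  proof (rule simple_zero_sign_change[OF deriv_u \<open>u (3 * T / 4) = 0\<close>
        deriv_nonzero_at_zero[OF \<open>u (3 * T / 4) = 0\<close>]])
    show "T / 2 < 3 * T / 4" "3 * T / 4 < t"
      using T_pos assms by simp_all
    fix x assume "x \<in> {T / 2..t}" "x \<noteq> 3 * T / 4"
    then show "u x \<noteq> 0"
      using assms T_pos zero_iff[of x] by auto
  qed
  moreover have "u (T / 2) < 0"
    using T_pos by (intro negative_middle_half) simp_all
  ultimately show ?thesis
    by (simp add: mult_less_0_iff)
qed

lemma periodic: "u (t + T) = u t"
proof -
  have "(u T)\<^sup>2 = 1"
    by (simp add: square_eq_profile phi_quarters profile_eq_1)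
  moreover have "0 < u T"
    using T_pos by (intro positive_last_quarter) simp_all
  ultimately have "u T = 1"
    by (simp add: power2_eq_1_iff)
  then show ?thesis
    by (rule periodic_if_returns)
qed

end

theorem theorem1:
  fixes c1 c3 c5 :: real and u u' :: "real \<Rightarrow> real"
  assumes c5_pos: "c5 > 0"
    and Delta: "3 * c3\<^sup>2 - 4 * c5 * (4 * c1 + c3 + c5) \<le> 0"
    and P_pos: "c1 + c3 + c5 > 0"
    and Q_pos: "6 * c1 + 3 * c3 + 2 * c5 > 0"
    and k2_lt1: "1/2 - sqrt 6 / 8 * (4 * c1 + 3 * c3 + 2 * c5)
                   / sqrt ((c1 + c3 + c5) * (6 * c1 + 3 * c3 + 2 * c5)) < 1"
    and du: "\<And>t. (u has_real_derivative u' t) (at t)"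
    and ddu: "\<And>t. (u' has_real_derivative - (c1 * u t + c3 * (u t)^3 + c5 * (u t)^5)) (at t)"
    and init_u: "u 0 = 1"
    and init_du: "u' 0 = 0"
  shows
    "let P = c1 + c3 + c5; Q = 6 * c1 + 3 * c3 + 2 * c5; K = 4 * c1 + 3 * c3 + 2 * c5;
         A = root 4 6 / 2 * (1 / root 4 (P * Q));
         B = Q / (6 * P);
         k = sqrt (1/2 - sqrt 6 / 8 * K / sqrt (P * Q));
         T = 8 * A * ellK k
     in (\<forall>t. sin (jacobi_am (2 * ellK k - t / A) k / 2) \<noteq> 0 \<longrightarrow>
            (u t)\<^sup>2 = sqrt B / (sqrt B + (cot (jacobi_am (2 * ellK k - t / A) k / 2))\<^sup>2))
      \<and> T > 0 \<and> (\<forall>t. u (t + T) = u t)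
      \<and> (\<forall>t. 0 \<le> t \<and> t < T / 4 \<longrightarrow> u t > 0)
      \<and> (\<forall>t. 3 * T / 4 < t \<and> t \<le> T \<longrightarrow> u t > 0)
      \<and> (\<forall>t. T / 4 < t \<and> t < 3 * T / 4 \<longrightarrow> u t < 0)"
proof -
  interpret quintic_cnoidal_solution c1 c3 c5 u u'
    by unfold_locales (fact du ddu init_u init_du Delta P_pos Q_pos k2_lt1)+
  show ?thesis
    using square_eq_cot T_pos periodic positive_first_quarter positive_last_quarter negative_middle_half
    unfolding Let_def phi_def T_def A_def B_def k_def P_def Q_def K_def
    by auto
qed

end
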